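(* Let $\mathcal X,\mathcal C,d$ be as in the context, $\epsilon\in[0,1]$, $N\ge1$, and let $\mathcal B$ be any set of $M$ vectors $b\in\{-1,1\}^d$ satisfying $\sum_{y\in C}b_{(y,C)}=0$ for all $C\in\mathcal C$ and $\sum_{C\in\mathcal C,\,C\ni x}b_{(x,C)}=0$ for all $x\in\mathcal X$. Let $\mathbb P_0=p_0^N$ and $\mathbb P_1=\frac1M\sum_{b\in\mathcal B}q_{b,\epsilon}^N$. Then $$\chi^2(\mathbb P_1,\mathbb P_0)+1\le\frac1{M^2}\sum_{b,b'\in\mathcal B}\exp\Big(\frac{N\epsilon^2}{d}b^Tb'\Big).$$
   Context: $\mathcal X$ is a finite set of $n$ items, $\mathcal C$ a collection of distinct subsets of $\mathcal X$ of size at least 2, $d=\sum_{C\in\mathcal C}|C|$, and vectors/distributions in dimension $d$ are indexed by pairs $(x,C)$ with $x\in C\in\mathcal C$. $p_0$ is the uniform distribution on these $d$ pairs, and for $b$ as in the claim $q_{b,\epsilon}((x,C))=\frac1d+\frac{\epsilon b_{(x,C)}}d$. For a distribution $\mu$, $\mu^N$ is the law of $N$ i.i.d. samples. For distributions $P,Q$ on a finite set, $\chi^2(P,Q)=\mathbb E_Q[(dP/dQ)^2]-1$. *)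

theory Defs
  imports "HOL-Analysis.Analysis"
begin

definition pairs :: "'a set set \<Rightarrow> ('a \<times> 'a set) set" where
  "pairs CC = {(x, C). C \<in> CC \<and> x \<in> C}"

definition p0 :: "'a set set \<Rightarrow> ('a \<times> 'a set) \<Rightarrow> real" where
  "p0 CC p = (if p \<in> pairs CC then 1 / real (card (pairs CC)) else 0)"

definition qdist :: "'a set set \<Rightarrow> (('a \<times> 'a set) \<Rightarrow> real) \<Rightarrow> real \<Rightarrow> ('a \<times> 'a set) \<Rightarrow> real" where
  "qdist CC b \<epsilon> p = (if p \<in> pairs CC
      then 1 / real (card (pairs CC)) + \<epsilon> * b p / real (card (pairs CC)) else 0)"

definition samples :: "'s set \<Rightarrow> nat \<Rightarrow> (nat \<Rightarrow> 's) set" where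
  "samples S N = PiE {..<N} (\<lambda>_. S)"

definition prodlaw :: "('s \<Rightarrow> real) \<Rightarrow> nat \<Rightarrow> (nat \<Rightarrow> 's) \<Rightarrow> real" where
  "prodlaw \<mu> N s = (\<Prod>i<N. \<mu> (s i))"

definition chi2 :: "'s set \<Rightarrow> ('s \<Rightarrow> real) \<Rightarrow> ('s \<Rightarrow> real) \<Rightarrow> real" where
  "chi2 S P Q = (\<Sum>s\<in>S. Q s * (P s / Q s)^2) - 1"

end

theory Submission
  imports Defs
begin

text \<open>The reference law is a product, so the second moment of the likelihood ratio of the
mixture splits into pairwise terms, each factorising over the \<open>N\<close> samples:
\<open>\<chi>\<^sup>2 + 1 = M\<^sup>-\<^sup>2 \<Sum>\<^sub>b\<^sub>,\<^sub>b\<^sub>' (\<Sum>\<^sub>p q\<^sub>b p * q\<^sub>b\<^sub>' p / p\<^sub>0 p)\<^sup>N\<close>.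
Since every \<open>b\<close> sums to zero, the one-sample factor is \<open>1 + \<epsilon>\<^sup>2 b\<^sup>Tb' / d\<close>, nonnegative
because \<open>|b\<^sup>Tb'| \<le> d\<close>, and \<open>(1 + x)\<^sup>N \<le> exp (N x)\<close> concludes.\<close>

lemma sum_prodlaw_samples:
  assumes "finite S"
  shows "(\<Sum>s\<in>samples S N. prodlaw f N s) = (\<Sum>x\<in>S. f x) ^ N"
proof -
  have "(\<Prod>i\<in>{..<N}. \<Sum>x\<in>S. f x) = (\<Sum>s\<in>PiE {..<N} (\<lambda>_. S). \<Prod>i\<in>{..<N}. f (s i))"
    using assms by (intro prod_sum_PiE) auto
  then show ?thesis
    by (simp add: samples_def prodlaw_def)
qed

lemma prodlaw_mult_divide:
  fixes \<mu> \<mu>' \<nu> :: "'s \<Rightarrow> real"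
  shows "prodlaw \<mu> N s * prodlaw \<mu>' N s / prodlaw \<nu> N s = prodlaw (\<lambda>x. \<mu> x * \<mu>' x / \<nu> x) N s"
  by (simp add: prodlaw_def prod_dividef prod.distrib)

lemma chi2_mixture_prodlaw:
  fixes \<mu> :: "'b \<Rightarrow> 's \<Rightarrow> real"
  assumes "finite S"
  shows "chi2 (samples S N) (\<lambda>s. c * (\<Sum>b\<in>B. prodlaw (\<mu> b) N s)) (prodlaw \<nu> N) + 1
         = c^2 * (\<Sum>b\<in>B. \<Sum>b'\<in>B. (\<Sum>x\<in>S. \<mu> b x * \<mu> b' x / \<nu> x) ^ N)"
proof -
  \<comment> \<open>No positivity of \<open>\<nu>\<close> is needed: since \<open>x / 0 = 0\<close>, both sides vanish where \<open>Q = 0\<close>.\<close>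
  have pointwise: "Q * (c * P / Q)^2 = c^2 * (\<Sum>b\<in>B. \<Sum>b'\<in>B. F b * F b' / Q)"
    if "P = (\<Sum>b\<in>B. F b)" for P Q :: real and F :: "'b \<Rightarrow> real"
  proof -
    have "Q * (c * P / Q)^2 = c^2 * (P * P / Q)"
      by (cases "Q = 0") (simp_all add: power2_eq_square field_simps)
    then show ?thesis
      by (simp add: that sum_product sum_divide_distrib)
  qed
  have "chi2 (samples S N) (\<lambda>s. c * (\<Sum>b\<in>B. prodlaw (\<mu> b) N s)) (prodlaw \<nu> N) + 1
      = (\<Sum>s\<in>samples S N. c^2 * (\<Sum>b\<in>B. \<Sum>b'\<in>B.
                                prodlaw (\<lambda>x. \<mu> b x * \<mu> b' x / \<nu> x) N s))"
    by (simp add: chi2_def pointwise prodlaw_mult_divide)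
  also have "\<dots> = c^2 * (\<Sum>b\<in>B. \<Sum>b'\<in>B. \<Sum>s\<in>samples S N.
                                prodlaw (\<lambda>x. \<mu> b x * \<mu> b' x / \<nu> x) N s)"
    by (simp add: sum_distrib_left sum.swap[of _ "samples S N"])
  finally show ?thesis
    by (simp add: sum_prodlaw_samples[OF assms])
qed

lemma one_plus_power_le_exp:
  fixes x :: real
  assumes "0 \<le> 1 + x"
  shows "(1 + x) ^ n \<le> exp (real n * x)"
proof -
  have "(1 + x) ^ n \<le> exp x ^ n"
    using assms by (intro power_mono) (auto simp: exp_ge_add_one_self)
  then show ?thesis
    by (simp add: exp_of_nat_mult)
qed

lemma finite_pairs:
  assumes "finite X" "\<And>C. C \<in> CC \<Longrightarrow> C \<subseteq> X"
  shows "finite (pairs CC)"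
proof -
  have "pairs CC \<subseteq> X \<times> Pow X"
    using assms(2) by (auto simp: pairs_def)
  then show ?thesis
    using assms(1) finite_subset by blast
qed

lemma sum_pairs:
  fixes f :: "'a \<times> 'a set \<Rightarrow> real"
  assumes "finite X" "\<And>C. C \<in> CC \<Longrightarrow> C \<subseteq> X"
  shows "(\<Sum>p\<in>pairs CC. f p) = (\<Sum>C\<in>CC. \<Sum>y\<in>C. f (y, C))"
proof -
  have "finite CC"
    using assms by (meson Pow_iff finite_Pow_iff finite_subset subsetI)
  moreover have "\<And>C. C \<in> CC \<Longrightarrow> finite C"
    using assms finite_subset by blast
  moreover have "pairs CC = (\<lambda>(C, x). (x, C)) ` (SIGMA C:CC. C)"
    by (auto simp: pairs_def image_iff)
  moreover have "inj_on (\<lambda>(C, x). (x, C)) (SIGMA C:CC. C)"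
    by (auto simp: inj_on_def)
  ultimately show ?thesis
    by (simp only: sum.reindex comp_def) (simp add: sum.Sigma split_beta)
qed

lemma sum_qdist_qdist_div_p0:
  assumes "finite (pairs CC)" "pairs CC \<noteq> {}"
    and "(\<Sum>p\<in>pairs CC. b p) = 0" "(\<Sum>p\<in>pairs CC. b' p) = 0"
  shows "(\<Sum>p\<in>pairs CC. qdist CC b \<epsilon> p * qdist CC b' \<epsilon> p / p0 CC p)
         = 1 + \<epsilon>^2 / real (card (pairs CC)) * (\<Sum>p\<in>pairs CC. b p * b' p)"
proof -
  define d where "d = real (card (pairs CC))"
  have "d > 0"
    using assms(1,2) by (simp add: d_def card_gt_0_iff)
  have "(\<Sum>p\<in>pairs CC. qdist CC b \<epsilon> p * qdist CC b' \<epsilon> p / p0 CC p)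
      = (\<Sum>p\<in>pairs CC. (1 + \<epsilon> * b p + \<epsilon> * b' p + \<epsilon>^2 * (b p * b' p)) / d)"
    using \<open>d > 0\<close>
    by (intro sum.cong) (auto simp: qdist_def p0_def d_def field_simps power2_eq_square)
  also have "\<dots> = (d + \<epsilon> * (\<Sum>p\<in>pairs CC. b p) + \<epsilon> * (\<Sum>p\<in>pairs CC. b' p)
                   + \<epsilon>^2 * (\<Sum>p\<in>pairs CC. b p * b' p)) / d"
    by (simp add: sum_divide_distrib[symmetric] sum.distrib sum_distrib_left d_def)
  also have "\<dots> = 1 + \<epsilon>^2 / d * (\<Sum>p\<in>pairs CC. b p * b' p)"
    using assms(3,4) \<open>d > 0\<close> by (simp add: field_simps)
  finally show ?thesis
    by (simp add: d_def)
qed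

lemma sum_sign_product_ge:
  assumes "b \<in> S \<rightarrow> {-1, 1}" "b' \<in> S \<rightarrow> {-1, 1}"
  shows "- real (card S) \<le> (\<Sum>p\<in>S. b p * b' p :: real)"
proof -
  have "(\<Sum>p\<in>S. - 1) \<le> (\<Sum>p\<in>S. b p * b' p :: real)"
  proof (intro sum_mono)
    fix p
    assume "p \<in> S"
    then have "b p \<in> {-1, 1}" "b' p \<in> {-1, 1}"
      using assms by auto
    then show "- 1 \<le> b p * b' p"
      by auto
  qed
  then show ?thesis
    by simp
qed

lemma sum_qdist_qdist_div_p0_power_le_exp:
  assumes "finite (pairs CC)" "0 \<le> \<epsilon>" "\<epsilon> \<le> 1" "N \<ge> 1"
    and "b \<in> pairs CC \<rightarrow> {-1, 1}" "b' \<in> pairs CC \<rightarrow> {-1, 1}"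
    and "(\<Sum>p\<in>pairs CC. b p) = 0" "(\<Sum>p\<in>pairs CC. b' p) = 0"
  shows "(\<Sum>p\<in>pairs CC. qdist CC b \<epsilon> p * qdist CC b' \<epsilon> p / p0 CC p) ^ N
         \<le> exp (real N * \<epsilon>^2 / real (card (pairs CC)) * (\<Sum>p\<in>pairs CC. b p * b' p))"
proof (cases "pairs CC = {}")
  case True
  then show ?thesis
    using \<open>N \<ge> 1\<close> by (simp add: power_0_left)
next
  case False
  define d where "d = real (card (pairs CC))"
  define x where "x = \<epsilon>^2 / d * (\<Sum>p\<in>pairs CC. b p * b' p)"
  have "d > 0"
    using assms(1) False by (simp add: d_def card_gt_0_iff)
  have "\<epsilon>^2 / d * (- d) \<le> x"
    unfolding x_def using sum_sign_product_ge[OF assms(5,6)] \<open>d > 0\<close>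
    by (intro mult_left_mono) (auto simp: d_def)
  moreover have "\<epsilon>^2 \<le> 1"
    using assms(2,3) by (simp add: power_le_one)
  ultimately have "0 \<le> 1 + x"
    using \<open>d > 0\<close> by simp
  then have "(1 + x) ^ N \<le> exp (real N * x)"
    by (rule one_plus_power_le_exp)
  then show ?thesis
    using sum_qdist_qdist_div_p0[OF assms(1) False assms(7,8)]
    by (simp add: x_def d_def mult.assoc)
qed

theorem lemma5p1:
  fixes X :: "'a set" and CC :: "'a set set" and \<epsilon> :: real and N :: nat
    and B :: "(('a \<times> 'a set) \<Rightarrow> real) set"
  assumes "finite X"
    and "\<And>C. C \<in> CC \<Longrightarrow> C \<subseteq> X \<and> card C \<ge> 2"
    and "0 \<le> \<epsilon>" and "\<epsilon> \<le> 1" and "N \<ge> 1"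
    and "finite B" and "B \<noteq> {}"
    and "B \<subseteq> pairs CC \<rightarrow>\<^sub>E {-1, 1}"
    and "\<And>b C. b \<in> B \<Longrightarrow> C \<in> CC \<Longrightarrow> (\<Sum>y\<in>C. b (y, C)) = 0"
    and "\<And>b x. b \<in> B \<Longrightarrow> x \<in> X \<Longrightarrow> (\<Sum>C\<in>{C\<in>CC. x \<in> C}. b (x, C)) = 0"
  shows "chi2 (samples (pairs CC) N)
            (\<lambda>s. (1 / real (card B)) * (\<Sum>b\<in>B. prodlaw (qdist CC b \<epsilon>) N s))
            (prodlaw (p0 CC) N) + 1
         \<le> (1 / real (card B)^2) *
            (\<Sum>b\<in>B. \<Sum>b'\<in>B. exp (real N * \<epsilon>^2 / real (card (pairs CC))
                                    * (\<Sum>p\<in>pairs CC. b p * b' p)))"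
proof -
  have CX: "\<And>C. C \<in> CC \<Longrightarrow> C \<subseteq> X"
    using assms(2) by blast
  have fin: "finite (pairs CC)"
    using finite_pairs[OF assms(1) CX] .
  have signs: "b \<in> pairs CC \<rightarrow> {-1, 1}" if "b \<in> B" for b
    using assms(8) that by (auto simp: PiE_def)
  have balanced: "(\<Sum>p\<in>pairs CC. b p) = 0" if "b \<in> B" for b
    using that assms(9) by (simp add: sum_pairs[OF assms(1) CX])
  have "chi2 (samples (pairs CC) N)
            (\<lambda>s. (1 / real (card B)) * (\<Sum>b\<in>B. prodlaw (qdist CC b \<epsilon>) N s))
            (prodlaw (p0 CC) N) + 1
      = (1 / real (card B))^2 * (\<Sum>b\<in>B. \<Sum>b'\<in>B.
            (\<Sum>p\<in>pairs CC. qdist CC b \<epsilon> p * qdist CC b' \<epsilon> p / p0 CC p) ^ N)"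
    by (rule chi2_mixture_prodlaw[OF fin])
  also have "\<dots> \<le> (1 / real (card B))^2 * (\<Sum>b\<in>B. \<Sum>b'\<in>B.
            exp (real N * \<epsilon>^2 / real (card (pairs CC)) * (\<Sum>p\<in>pairs CC. b p * b' p)))"
    using assms(3-5)
    by (intro mult_left_mono sum_mono sum_qdist_qdist_div_p0_power_le_exp fin signs balanced) auto
  finally show ?thesis
    by (simp add: power_divide)
qed

end
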